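(* Let $u\in U$ and let $\Phi$ be a continuous Young function satisfying the $\Delta_2$ condition. Then: (1) for all $f\in wL_\Phi^u(\mathbb{R}^n)$ and all $x\in\mathbb{R}^n$, we have $L_xf\in wL_\Phi^u(\mathbb{R}^n)$ and $\|L_xf\|_{wL_\Phi^u(\mathbb{R}^n)} \le u(x)\|f\|_{wL_\Phi^u(\mathbb{R}^n)}$; (2) if $f\in wL_\Phi^u(\mathbb{R}^n)$ and $f\neq 0$, then there is a constant $C>0$ (depending on $f$) such that $\frac{u(x)}{C} \le \|L_xf\|_{wL_\Phi^u(\mathbb{R}^n)} \le C u(x)$ for all $x \in \mathbb{R}^n$.
   Context: $U$ denotes the set of all functions $u:\mathbb{R}^n\to(0,\infty)$ such that $u(x+y)\le u(x)u(y)$ for all $x,y\in\mathbb{R}^n$. A Young function is a function $\Phi:[0,\infty)\to[0,\infty)$ that is convex, left-continuous, satisfies $\lim_{t\to0}\Phi(t)=0=\Phi(0)$ and $\lim_{t\to\infty}\Phi(t)=\infty$. $\Phi$ satisfies the $\Delta_2$ condition if there is $K>0$ with $\Phi(2t)\le K\Phi(t)$ for all $t\ge0$. For a Young function $\Phi$ and a weight $u:\mathbb{R}^n\to(0,\infty)$, the weighted weak Orlicz space $wL_\Phi^u(\mathbb{R}^n)$ is the set of measurable $f:\mathbb{R}^n\to\mathbb{R}$ with $\|f\|_{wL_\Phi^u(\mathbb{R}^n)} := \inf\{ b>0 : \sup_{t>0} \Phi(t)\,|\{x\in\mathbb{R}^n : |u(x)f(x)|/b > t\}| \le 1\} < \infty$,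 where $|\cdot|$ is Lebesgue measure. For $x\in\mathbb{R}^n$, the translation $L_xf$ is defined by $L_xf(y):=f(y-x)$. *)

theory Defs
  imports "HOL-Analysis.Analysis"
begin

definition submult_weights :: "('a::euclidean_space \<Rightarrow> real) set" where
  "submult_weights = {u. (\<forall>x. 0 < u x) \<and> (\<forall>x y. u (x + y) \<le> u x * u y)}"

text \<open>Young functions (only the values on [0,\<infinity>) matter).\<close>
definition young_function :: "(real \<Rightarrow> real) \<Rightarrow> bool" where
  "young_function \<Phi> \<longleftrightarrow>
     (\<forall>t\<ge>0. 0 \<le> \<Phi> t) \<and>
     convex_on {0..} \<Phi> \<and>
     (\<forall>t>0. (\<Phi> \<longlongrightarrow> \<Phi> t) (at_left t)) \<and>
     \<Phi> 0 = 0 \<and> (\<Phi> \<longlongrightarrow> 0) (at_right 0) \<and>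
     filterlim \<Phi> at_top at_top"

definition delta2 :: "(real \<Rightarrow> real) \<Rightarrow> bool" where
  "delta2 \<Phi> \<longleftrightarrow> (\<exists>K>0. \<forall>t\<ge>0. \<Phi> (2 * t) \<le> K * \<Phi> t)"

definition leb_outer :: "'a::euclidean_space set \<Rightarrow> ennreal" where
  "leb_outer A = (INF B \<in> {B \<in> sets lebesgue. A \<subseteq> B}. emeasure lebesgue B)"

definition wOrlicz_admissible ::
  "(real \<Rightarrow> real) \<Rightarrow> ('a::euclidean_space \<Rightarrow> real) \<Rightarrow> ('a \<Rightarrow> real) \<Rightarrow> real \<Rightarrow> bool" where
  "wOrlicz_admissible \<Phi> u f b \<longleftrightarrow>
     0 < b \<and> (\<forall>t>0. ennreal (\<Phi> t) * leb_outer {x. \<bar>u x * f x\<bar> / b > t} \<le> 1)"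

definition wOrlicz_norm ::
  "(real \<Rightarrow> real) \<Rightarrow> ('a::euclidean_space \<Rightarrow> real) \<Rightarrow> ('a \<Rightarrow> real) \<Rightarrow> real" where
  "wOrlicz_norm \<Phi> u f = Inf {b. wOrlicz_admissible \<Phi> u f b}"

definition wOrlicz_space ::
  "(real \<Rightarrow> real) \<Rightarrow> ('a::euclidean_space \<Rightarrow> real) \<Rightarrow> ('a \<Rightarrow> real) set" where
  "wOrlicz_space \<Phi> u = {f. f \<in> borel_measurable lebesgue \<and> (\<exists>b. wOrlicz_admissible \<Phi> u f b)}"

definition transl :: "'a::euclidean_space \<Rightarrow> ('a \<Rightarrow> real) \<Rightarrow> ('a \<Rightarrow> real)" where
  "transl x f = (\<lambda>y. f (y - x))"

end

theory Submission
  imports Defs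
begin

text \<open>Submultiplicativity gives u y \<le> u x * u (y - x), so every superlevel set of
  u * L_x f at height t * u x * b lies in the translate by x of the superlevel set of u * f
  at height t * b; translation invariance of Lebesgue outer measure then turns admissible
  constants b for f into admissible constants u x * b for L_x f.
  Conversely u x \<le> u (x + z) * u (- z), so u * L_x f exceeds c * u x on the translate by x of
  B = {z. c < |f z| / u (- z)}, and B has positive outer measure for some c > 0 when f is not
  a.e. zero. Since \<Phi> t \<rightarrow> \<infinity>, an admissible b must then satisfy c * u x / b < T for a fixed T.\<close>

lemma leb_outer_mono: "A \<subseteq> B \<Longrightarrow> leb_outer A \<le> leb_outer B"
  unfolding leb_outer_def by (rule INF_superset_mono) auto

lemma leb_outer_translation_le:
  fixes x :: "'a::euclidean_space"
  shows "leb_outer ((+) x ` A) \<le> leb_outer A"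
  unfolding leb_outer_def
proof (rule INF_greatest)
  fix B assume B: "B \<in> {B \<in> sets lebesgue. A \<subseteq> B}"
  then have "(+) x ` B \<in> {B' \<in> sets lebesgue. (+) x ` A \<subseteq> B'}"
    using lebesgue_sets_translation[of B x] by auto
  then have "(INF B'\<in>{B' \<in> sets lebesgue. (+) x ` A \<subseteq> B'}. emeasure lebesgue B')
      \<le> emeasure lebesgue ((+) x ` B)"
    by (rule INF_lower)
  also have "emeasure lebesgue ((+) x ` B) = emeasure lebesgue B"
    using emeasure_lebesgue_affine[of 1 x B] by (simp add: add.commute cong: image_cong_simp)
  finally show "(INF B'\<in>{B' \<in> sets lebesgue. (+) x ` A \<subseteq> B'}. emeasure lebesgue B')
      \<le> emeasure lebesgue B" .
qed

lemma leb_outer_translation: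
  fixes x :: "'a::euclidean_space"
  shows "leb_outer ((+) x ` A) = leb_outer A"
proof (rule antisym[OF leb_outer_translation_le])
  have "A = (+) (- x) ` ((+) x ` A)" by (auto simp: image_image)
  then show "leb_outer A \<le> leb_outer ((+) x ` A)"
    by (metis leb_outer_translation_le)
qed

lemma negligible_if_leb_outer_eq_0:
  fixes A :: "'a::euclidean_space set"
  assumes "leb_outer A = 0"
  shows "negligible A"
  unfolding negligible_outer
proof (intro allI impI)
  fix e :: real assume e: "e > 0"
  then have "(INF B\<in>{B \<in> sets lebesgue. A \<subseteq> B}. emeasure lebesgue B) < ennreal e"
    using assms by (simp add: leb_outer_def)
  then obtain B where B: "B \<in> sets lebesgue" "A \<subseteq> B" "emeasure lebesgue B < ennreal e"
    by (auto simp: INF_less_iff)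
  then have fin: "emeasure lebesgue B < top"
    using order.strict_trans ennreal_less_top by blast
  then have "B \<in> lmeasurable" using B(1) by (simp add: fmeasurable_def)
  moreover have "ennreal (measure lebesgue B) < ennreal e"
    using B(3) fin emeasure_eq_ennreal_measure[of lebesgue B] by simp
  then have "measure lebesgue B < e" using e by (simp add: ennreal_less_iff)
  ultimately show "\<exists>T. A \<subseteq> T \<and> T \<in> lmeasurable \<and> measure lebesgue T < e"
    using B(2) by blast
qed

lemma leb_outer_superlevel_ratio_ne_0:
  fixes f g :: "'a::euclidean_space \<Rightarrow> real"
  assumes g: "\<And>z. 0 < g z" and nz: "\<not> (AE z in lebesgue. f z = 0)"
  shows "\<exists>c>0. leb_outer {z. c < \<bar>f z\<bar> / g z} \<noteq> 0"
proof (rule ccontr)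
  define B where "B n = {z. 1 / real (Suc n) < \<bar>f z\<bar> / g z}" for n
  assume "\<not> ?thesis"
  then have "negligible (B n)" for n
    by (auto simp: B_def intro: negligible_if_leb_outer_eq_0)
  then have neg: "negligible (\<Union>n. B n)" by (rule negligible_Union_nat)
  have "{z. f z \<noteq> 0} \<subseteq> (\<Union>n. B n)"
  proof
    fix z assume "z \<in> {z. f z \<noteq> 0}"
    then have "0 < \<bar>f z\<bar> / g z" using g[of z] by simp
    then obtain n where "inverse (real (Suc n)) < \<bar>f z\<bar> / g z"
      using reals_Archimedean by blast
    then show "z \<in> (\<Union>n. B n)" by (auto simp: B_def field_simps)
  qed
  then have "AE z in lebesgue. f z = 0"
    using neg by (intro AE_I'[of "\<Union>n. B n"]) (auto simp: negligible_iff_null_sets)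
  with nz show False by blast
qed

lemma young_function_eventually_mult_gt_1:
  assumes "young_function \<Phi>" and "m \<noteq> 0"
  shows "\<exists>T>0. \<forall>t\<ge>T. 1 < ennreal (\<Phi> t) * m"
proof -
  obtain r where r: "0 < r" "ennreal r \<le> m"
  proof (cases m)
    case (real r')
    with assms(2) show ?thesis by (intro that[of r']) auto
  next
    case top
    then show ?thesis by (intro that[of 1]) auto
  qed
  have "filterlim \<Phi> at_top at_top" using assms(1) by (simp add: young_function_def)
  then obtain N where N: "\<And>t. t \<ge> N \<Longrightarrow> 2 / r \<le> \<Phi> t"
    by (auto simp: filterlim_at_top eventually_at_top_linorder)
  have "1 < ennreal (\<Phi> t) * m" if "t \<ge> max N 1" for t
  proof -
    have "2 \<le> \<Phi> t * r" using N[of t] that r(1) by (simp add: divide_le_eq)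
    then have "1 < ennreal (\<Phi> t * r)" by simp
    also have "\<dots> = ennreal (\<Phi> t) * ennreal r"
      using \<open>2 \<le> \<Phi> t * r\<close> r(1) by (smt (verit) ennreal_mult mult_nonpos_nonneg)
    also have "\<dots> \<le> ennreal (\<Phi> t) * m" by (rule mult_left_mono[OF r(2)]) simp
    finally show ?thesis .
  qed
  then show ?thesis by (intro exI[of _ "max N 1"]) auto
qed
lemma submult_weights_pos: "u \<in> submult_weights \<Longrightarrow> 0 < u x"
  by (simp add: submult_weights_def)

lemma submult_weights_add_le: "u \<in> submult_weights \<Longrightarrow> u (x + y) \<le> u x * u y"
  by (simp add: submult_weights_def)

lemma measurable_transl:
  fixes f :: "'a::euclidean_space \<Rightarrow> real"
  assumes "f \<in> borel_measurable lebesgue"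
  shows "transl x f \<in> borel_measurable lebesgue"
proof -
  have "(\<lambda>y. y - x) \<in> lebesgue \<rightarrow>\<^sub>M lebesgue"
    using lebesgue_affine_measurable[of "\<lambda>_. 1" "- x"] by (simp add: euclidean_representation)
  then show ?thesis
    using measurable_comp[OF _ assms] by (simp add: transl_def o_def)
qed

lemma superlevel_transl_subset:
  fixes u f :: "'a::euclidean_space \<Rightarrow> real"
  assumes u: "u \<in> submult_weights" and b: "0 < b"
  shows "{y. t < \<bar>u y * transl x f y\<bar> / (u x * b)} \<subseteq> (+) x ` {z. t < \<bar>u z * f z\<bar> / b}"
proof
  fix y assume "y \<in> {y. t < \<bar>u y * transl x f y\<bar> / (u x * b)}"
  then have y: "t < \<bar>u y * f (y - x)\<bar> / (u x * b)" by (simp add: transl_def)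
  have pos: "0 < u x" "0 < u y" "0 < u (y - x)" and "u y \<le> u x * u (y - x)"
    using submult_weights_add_le[OF u, of x "y - x"] submult_weights_pos[OF u] by auto
  then have "\<bar>u y * f (y - x)\<bar> \<le> u x * \<bar>u (y - x) * f (y - x)\<bar>"
    using mult_right_mono[OF \<open>u y \<le> u x * u (y - x)\<close> abs_ge_zero[of "f (y - x)"]]
    by (simp add: abs_mult mult.assoc)
  then have "\<bar>u y * f (y - x)\<bar> / (u x * b) \<le> \<bar>u (y - x) * f (y - x)\<bar> / b"
    using pos b by (simp add: divide_le_eq mult.commute)
  with y have "y - x \<in> {z. t < \<bar>u z * f z\<bar> / b}" by simp
  then show "y \<in> (+) x ` {z. t < \<bar>u z * f z\<bar> / b}" by (rule rev_image_eqI) simp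
qed

lemma translation_superlevel_ratio_subset:
  fixes u f :: "'a::euclidean_space \<Rightarrow> real"
  assumes u: "u \<in> submult_weights" and b: "0 < b"
  shows "(+) x ` {z. c < \<bar>f z\<bar> / u (- z)} \<subseteq> {y. c * u x / b < \<bar>u y * transl x f y\<bar> / b}"
proof
  fix y assume "y \<in> (+) x ` {z. c < \<bar>f z\<bar> / u (- z)}"
  then obtain z where z: "c < \<bar>f z\<bar> / u (- z)" and y: "y = x + z" by blast
  have pos: "0 < u x" "0 < u y" "0 < u (- z)" and "u x \<le> u y * u (- z)"
    using submult_weights_add_le[OF u, of y "- z"] submult_weights_pos[OF u] y by auto
  have "c * u x < \<bar>f z\<bar> / u (- z) * u x" using mult_strict_right_mono[OF z pos(1)] .
  also have "\<dots> \<le> \<bar>f z\<bar> * u y"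
    using \<open>u x \<le> u y * u (- z)\<close> pos(3) by (simp add: divide_le_eq mult.assoc mult_left_mono)
  also have "\<dots> = \<bar>u y * transl x f y\<bar>"
    using pos(2) y by (simp add: transl_def abs_mult)
  finally show "y \<in> {y. c * u x / b < \<bar>u y * transl x f y\<bar> / b}"
    using b by (simp add: divide_strict_right_mono)
qed

lemma wOrlicz_admissible_transl:
  fixes u :: "'a::euclidean_space \<Rightarrow> real"
  assumes u: "u \<in> submult_weights" and adm: "wOrlicz_admissible \<Phi> u f b"
  shows "wOrlicz_admissible \<Phi> u (transl x f) (u x * b)"
proof -
  have b: "0 < b" using adm by (simp add: wOrlicz_admissible_def)
  have "ennreal (\<Phi> t) * leb_outer {y. t < \<bar>u y * transl x f y\<bar> / (u x * b)} \<le> 1"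
    if t: "t > 0" for t
  proof -
    have "ennreal (\<Phi> t) * leb_outer {y. t < \<bar>u y * transl x f y\<bar> / (u x * b)}
        \<le> ennreal (\<Phi> t) * leb_outer ((+) x ` {z. t < \<bar>u z * f z\<bar> / b})"
      by (intro mult_left_mono leb_outer_mono superlevel_transl_subset u b) simp
    also have "\<dots> = ennreal (\<Phi> t) * leb_outer {z. t < \<bar>u z * f z\<bar> / b}"
      by (simp add: leb_outer_translation)
    also have "\<dots> \<le> 1" using adm t by (simp add: wOrlicz_admissible_def)
    finally show ?thesis .
  qed
  moreover have "0 < u x" using u by (rule submult_weights_pos)
  ultimately show ?thesis using b by (simp add: wOrlicz_admissible_def)
qed

lemma wOrlicz_admissible_transl_lower_bound:
  fixes u f :: "'a::euclidean_space \<Rightarrow> real"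
  assumes u: "u \<in> submult_weights" and "0 < c" and "0 < T"
    and big: "\<forall>t\<ge>T. 1 < ennreal (\<Phi> t) * leb_outer {z. c < \<bar>f z\<bar> / u (- z)}"
    and adm: "wOrlicz_admissible \<Phi> u (transl x f) b"
  shows "c * u x / T \<le> b"
proof (rule ccontr)
  assume "\<not> c * u x / T \<le> b"
  have b: "0 < b" using adm by (simp add: wOrlicz_admissible_def)
  define t where "t = c * u x / b"
  have "0 < u x" using u by (rule submult_weights_pos)
  then have "T \<le> t" "0 < t"
    using \<open>\<not> c * u x / T \<le> b\<close> \<open>0 < c\<close> \<open>0 < T\<close> b by (auto simp: t_def field_simps)
  have "1 < ennreal (\<Phi> t) * leb_outer {z. c < \<bar>f z\<bar> / u (- z)}"
    using big \<open>T \<le> t\<close> by blast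
  also have "\<dots> = ennreal (\<Phi> t) * leb_outer ((+) x ` {z. c < \<bar>f z\<bar> / u (- z)})"
    by (simp add: leb_outer_translation)
  also have "\<dots> \<le> ennreal (\<Phi> t) * leb_outer {y. t < \<bar>u y * transl x f y\<bar> / b}"
    unfolding t_def by (intro mult_left_mono leb_outer_mono translation_superlevel_ratio_subset u b) simp
  also have "\<dots> \<le> 1" using adm \<open>0 < t\<close> by (simp add: wOrlicz_admissible_def)
  finally show False by simp
qed

lemma wOrlicz_norm_le_admissible:
  "wOrlicz_admissible \<Phi> u f b \<Longrightarrow> wOrlicz_norm \<Phi> u f \<le> b"
  unfolding wOrlicz_norm_def
  by (rule cInf_lower) (auto intro: bdd_belowI[of _ 0] simp: wOrlicz_admissible_def)

lemma wOrlicz_norm_ge_lower_bound: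
  "\<exists>b. wOrlicz_admissible \<Phi> u f b \<Longrightarrow> (\<And>b. wOrlicz_admissible \<Phi> u f b \<Longrightarrow> c \<le> b)
    \<Longrightarrow> c \<le> wOrlicz_norm \<Phi> u f"
  unfolding wOrlicz_norm_def by (rule cInf_greatest) auto

lemma wOrlicz_space_transl:
  fixes u :: "'a::euclidean_space \<Rightarrow> real"
  assumes "u \<in> submult_weights" and "f \<in> wOrlicz_space \<Phi> u"
  shows "transl x f \<in> wOrlicz_space \<Phi> u"
  using assms measurable_transl[of f x] wOrlicz_admissible_transl[OF assms(1), of \<Phi> f _ x]
  by (auto simp: wOrlicz_space_def)

lemma wOrlicz_norm_transl_le:
  fixes u :: "'a::euclidean_space \<Rightarrow> real"
  assumes u: "u \<in> submult_weights" and f: "f \<in> wOrlicz_space \<Phi> u"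
  shows "wOrlicz_norm \<Phi> u (transl x f) \<le> u x * wOrlicz_norm \<Phi> u f"
proof -
  have "0 < u x" using u by (rule submult_weights_pos)
  have "wOrlicz_norm \<Phi> u (transl x f) / u x \<le> wOrlicz_norm \<Phi> u f"
  proof (rule wOrlicz_norm_ge_lower_bound)
    show "\<exists>b. wOrlicz_admissible \<Phi> u f b" using f by (simp add: wOrlicz_space_def)
  next
    fix b assume "wOrlicz_admissible \<Phi> u f b"
    then have "wOrlicz_norm \<Phi> u (transl x f) \<le> u x * b"
      by (intro wOrlicz_norm_le_admissible wOrlicz_admissible_transl u)
    then show "wOrlicz_norm \<Phi> u (transl x f) / u x \<le> b"
      using \<open>0 < u x\<close> by (simp add: divide_le_eq mult.commute)
  qed
  then show ?thesis using \<open>0 < u x\<close> by (simp add: divide_le_eq mult.commute)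
qed

lemma wOrlicz_norm_transl_ge:
  fixes u :: "'a::euclidean_space \<Rightarrow> real"
  assumes u: "u \<in> submult_weights" and "young_function \<Phi>"
    and f: "f \<in> wOrlicz_space \<Phi> u" and nz: "\<not> (AE x in lebesgue. f x = 0)"
  shows "\<exists>c>0. \<forall>x. c * u x \<le> wOrlicz_norm \<Phi> u (transl x f)"
proof -
  have "\<And>z. 0 < u (- z)" using u by (rule submult_weights_pos)
  then obtain c where "0 < c" and ne: "leb_outer {z. c < \<bar>f z\<bar> / u (- z)} \<noteq> 0"
    using leb_outer_superlevel_ratio_ne_0[of "\<lambda>z. u (- z)" f] nz by blast
  obtain T where "0 < T"
    and big: "\<forall>t\<ge>T. 1 < ennreal (\<Phi> t) * leb_outer {z. c < \<bar>f z\<bar> / u (- z)}"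
    using young_function_eventually_mult_gt_1[OF \<open>young_function \<Phi>\<close> ne] by blast
  have "c / T * u x \<le> wOrlicz_norm \<Phi> u (transl x f)" for x
  proof (rule wOrlicz_norm_ge_lower_bound)
    show "\<exists>b. wOrlicz_admissible \<Phi> u (transl x f) b"
      using wOrlicz_space_transl[OF u f] by (simp add: wOrlicz_space_def)
  next
    fix b assume "wOrlicz_admissible \<Phi> u (transl x f) b"
    then have "c * u x / T \<le> b"
      by (rule wOrlicz_admissible_transl_lower_bound[OF u \<open>0 < c\<close> \<open>0 < T\<close> big])
    then show "c / T * u x \<le> b" by simp
  qed
  then show ?thesis using \<open>0 < c\<close> \<open>0 < T\<close> by (intro exI[of _ "c / T"]) simp
qed

theorem lemma2p5:
  fixes u :: "'a::euclidean_space \<Rightarrow> real" and \<Phi> :: "real \<Rightarrow> real"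
  assumes "u \<in> submult_weights"
    and "young_function \<Phi>" and "continuous_on {0..} \<Phi>" and "delta2 \<Phi>"
  shows "(\<forall>f \<in> wOrlicz_space \<Phi> u. \<forall>x.
            transl x f \<in> wOrlicz_space \<Phi> u \<and>
            wOrlicz_norm \<Phi> u (transl x f) \<le> u x * wOrlicz_norm \<Phi> u f)
       \<and> (\<forall>f \<in> wOrlicz_space \<Phi> u. \<not> (AE x in lebesgue. f x = 0) \<longrightarrow>
            (\<exists>C>0. \<forall>x. u x / C \<le> wOrlicz_norm \<Phi> u (transl x f) \<and>
                        wOrlicz_norm \<Phi> u (transl x f) \<le> C * u x))"
proof (intro conjI ballI allI impI)
  fix f x assume f: "f \<in> wOrlicz_space \<Phi> u"
  show "transl x f \<in> wOrlicz_space \<Phi> u" using wOrlicz_space_transl[OF assms(1) f] .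
  show "wOrlicz_norm \<Phi> u (transl x f) \<le> u x * wOrlicz_norm \<Phi> u f"
    using wOrlicz_norm_transl_le[OF assms(1) f] .
next
  fix f assume f: "f \<in> wOrlicz_space \<Phi> u" and nz: "\<not> (AE x in lebesgue. f x = 0)"
  obtain c where "0 < c" and lower: "\<And>x. c * u x \<le> wOrlicz_norm \<Phi> u (transl x f)"
    using wOrlicz_norm_transl_ge[OF assms(1,2) f nz] by blast
  define C where "C = max (1 / c) (wOrlicz_norm \<Phi> u f)"
  have "0 < C" using \<open>0 < c\<close> by (simp add: C_def less_max_iff_disj)
  moreover have "u x / C \<le> wOrlicz_norm \<Phi> u (transl x f) \<and>
      wOrlicz_norm \<Phi> u (transl x f) \<le> C * u x" for x
  proof
    have "0 < u x" using assms(1) by (rule submult_weights_pos)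
    have "u x / C \<le> u x / (1 / c)"
      using \<open>0 < u x\<close> \<open>0 < c\<close> by (intro divide_left_mono) (auto simp: C_def less_max_iff_disj)
    then have "u x / C \<le> c * u x" by (simp add: mult.commute)
    then show "u x / C \<le> wOrlicz_norm \<Phi> u (transl x f)" using lower order_trans by blast
    have "u x * wOrlicz_norm \<Phi> u f \<le> C * u x"
      using \<open>0 < u x\<close> by (simp add: C_def mult.commute)
    then show "wOrlicz_norm \<Phi> u (transl x f) \<le> C * u x"
      using wOrlicz_norm_transl_le[OF assms(1) f, of x] by linarith
  qed
  ultimately show "\<exists>C>0. \<forall>x. u x / C \<le> wOrlicz_norm \<Phi> u (transl x f) \<and>
      wOrlicz_norm \<Phi> u (transl x f) \<le> C * u x" by blast
qed

end
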